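(* For every tree sequence $\pi$, the class $\mathcal{T}_\pi$ contains a BFD-tree, and any two BFD-trees in $\mathcal{T}_\pi$ are isomorphic.
   Context: A tree sequence is the degree sequence of some tree; $\mathcal{T}_\pi$ is the set of all trees with degree sequence $\pi$. For a connected graph with a chosen root $v_0$, a child of a vertex $w$ is a neighbor $v$ of $w$ with $\mathrm{dist}(v_0,v)=\mathrm{dist}(v_0,w)+1$. A BFD-ordering with root $v_0$ is a total ordering $\prec$ of the vertices arising from a breadth-first search starting at $v_0$ (so $v_0$ is first and vertices closer to $v_0$ precede vertices farther from $v_0$) such that: (B1) if $w_1\prec w_2$ then $v_1\prec v_2$ for every child $v_1$ of $w_1$ and every child $v_2$ of $w_2$; (B2) if $v\prec u$ then $d(v)\ge d(u)$, where $d$ denotes degree. A BFD-tree is a tree admitting a BFD-ordering for some root. *)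

theory Defs
  imports Main "HOL-Library.Multiset"
begin

definition graph :: "'a set \<Rightarrow> ('a \<Rightarrow> 'a \<Rightarrow> bool) \<Rightarrow> bool" where
  "graph V E \<longleftrightarrow> finite V \<and> (\<forall>u v. E u v \<longrightarrow> E v u) \<and> (\<forall>v. \<not> E v v)
     \<and> (\<forall>u v. E u v \<longrightarrow> u \<in> V \<and> v \<in> V)"

definition connected_graph :: "'a set \<Rightarrow> ('a \<Rightarrow> 'a \<Rightarrow> bool) \<Rightarrow> bool" where
  "connected_graph V E \<longleftrightarrow> (\<forall>u\<in>V. \<forall>v\<in>V. E\<^sup>*\<^sup>* u v)"

definition has_cycle :: "'a set \<Rightarrow> ('a \<Rightarrow> 'a \<Rightarrow> bool) \<Rightarrow> bool" where
  "has_cycle V E \<longleftrightarrow> (\<exists>vs. 3 \<le> length vs \<and> distinct vs \<and> set vs \<subseteq> V \<and>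
      (\<forall>i < length vs. E (vs ! i) (vs ! ((i + 1) mod length vs))))"

definition tree :: "'a set \<Rightarrow> ('a \<Rightarrow> 'a \<Rightarrow> bool) \<Rightarrow> bool" where
  "tree V E \<longleftrightarrow> graph V E \<and> V \<noteq> {} \<and> connected_graph V E \<and> \<not> has_cycle V E"

definition deg :: "'a set \<Rightarrow> ('a \<Rightarrow> 'a \<Rightarrow> bool) \<Rightarrow> 'a \<Rightarrow> nat" where
  "deg V E v = card {u \<in> V. E v u}"

definition degree_sequence :: "'a set \<Rightarrow> ('a \<Rightarrow> 'a \<Rightarrow> bool) \<Rightarrow> nat multiset" where
  "degree_sequence V E = image_mset (deg V E) (mset_set V)"

definition tree_sequence :: "nat multiset \<Rightarrow> bool" where
  "tree_sequence \<pi> \<longleftrightarrow> (\<exists>(V :: nat set) E. tree V E \<and> degree_sequence V E = \<pi>)"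

definition dist :: "('a \<Rightarrow> 'a \<Rightarrow> bool) \<Rightarrow> 'a \<Rightarrow> 'a \<Rightarrow> nat" where
  "dist E u v = (LEAST n. (E ^^ n) u v)"

definition child :: "('a \<Rightarrow> 'a \<Rightarrow> bool) \<Rightarrow> 'a \<Rightarrow> 'a \<Rightarrow> 'a \<Rightarrow> bool" where
  "child E v0 w v \<longleftrightarrow> E w v \<and> dist E v0 v = dist E v0 w + 1"

definition prec :: "'a list \<Rightarrow> 'a \<Rightarrow> 'a \<Rightarrow> bool" where
  "prec xs a b \<longleftrightarrow> (\<exists>i j. i < j \<and> j < length xs \<and> xs ! i = a \<and> xs ! j = b)"

definition BFD_ordering :: "'a set \<Rightarrow> ('a \<Rightarrow> 'a \<Rightarrow> bool) \<Rightarrow> 'a \<Rightarrow> 'a list \<Rightarrow> bool" where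
  "BFD_ordering V E v0 xs \<longleftrightarrow>
     distinct xs \<and> set xs = V \<and> v0 \<in> V \<and> xs ! 0 = v0 \<and>
     (\<forall>a b. prec xs a b \<longrightarrow> dist E v0 a \<le> dist E v0 b) \<and>
     (\<forall>w1 w2 v1 v2. prec xs w1 w2 \<longrightarrow> child E v0 w1 v1 \<longrightarrow> child E v0 w2 v2
        \<longrightarrow> prec xs v1 v2) \<and>
     (\<forall>v u. prec xs v u \<longrightarrow> deg V E v \<ge> deg V E u)"

definition BFD_tree :: "'a set \<Rightarrow> ('a \<Rightarrow> 'a \<Rightarrow> bool) \<Rightarrow> bool" where
  "BFD_tree V E \<longleftrightarrow> tree V E \<and> (\<exists>v0 xs. BFD_ordering V E v0 xs)"

definition isomorphic ::
  "'a set \<Rightarrow> ('a \<Rightarrow> 'a \<Rightarrow> bool) \<Rightarrow> 'b set \<Rightarrow> ('b \<Rightarrow> 'b \<Rightarrow> bool) \<Rightarrow> bool" where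
  "isomorphic V1 E1 V2 E2 \<longleftrightarrow>
     (\<exists>f. bij_betw f V1 V2 \<and> (\<forall>u\<in>V1. \<forall>v\<in>V1. E1 u v \<longleftrightarrow> E2 (f u) (f v)))"

end

theory Submission
  imports Defs
begin

(* Both halves go through the same normal form.  Number the vertices 0, ..., n-1 along an
   ordering whose root is vertex 0 and in which every other vertex j has its parent P j
   among the earlier vertices (P j < j).  The tree is then determined by the parent map P,
   its edges being exactly the pairs {j, P j} (parent_edge below).

   Uniqueness: along a BFD-ordering the parent map is monotone (condition B1), the degrees
   are non-increasing (B2), and the fibre of P over i has size deg i - [i > 0].  A monotone
   map on {1..<n} is determined by its fibre sizes, and the degree list is determined by
   the multiset pi, so two BFD-trees of the same sequence have the same parent map and are
   isomorphic.

   Existence: from the non-increasing degree list d of pi we build the monotone parent map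
   with the required fibre sizes explicitly (vertex j hangs below the first vertex whose
   cumulative child budget reaches j) and check that 0, 1, ..., n-1 is a BFD-ordering of
   the resulting tree. *)

lemma dist_le: "(E ^^ n) u v \<Longrightarrow> dist E u v \<le> n"
  unfolding dist_def by (rule Least_le)

lemma dist_attain: "(E ^^ n) u v \<Longrightarrow> (E ^^ dist E u v) u v"
  unfolding dist_def by (rule LeastI)

lemma has_cycle_intro:
  assumes "successively E vs" "distinct vs" "3 \<le> length vs" "set vs \<subseteq> V"
    and "E (last vs) (hd vs)"
  shows "has_cycle V E"
  unfolding has_cycle_def
proof (intro exI conjI allI impI)
  fix i assume i: "i < length vs"
  show "E (vs ! i) (vs ! ((i + 1) mod length vs))"
  proof (cases "Suc i < length vs")
    case True then show ?thesis using successively_nth[OF assms(1) True] by simp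
  next
    case False
    then have "i = length vs - 1" using i by simp
    moreover have "vs \<noteq> []" using assms(3) by auto
    ultimately show ?thesis using assms(5) i by (simp add: last_conv_nth hd_conv_nth)
  qed
qed (use assms in auto)

definition parent_edge :: "nat \<Rightarrow> (nat \<Rightarrow> nat) \<Rightarrow> nat \<Rightarrow> nat \<Rightarrow> bool" where
  "parent_edge n P j k \<longleftrightarrow> j < n \<and> k < n \<and> ((k \<noteq> 0 \<and> j = P k) \<or> (j \<noteq> 0 \<and> k = P j))"

lemma parent_edge_cong:
  assumes "\<And>k. 1 \<le> k \<Longrightarrow> k < n \<Longrightarrow> P k = Q k"
  shows "parent_edge n P j k \<longleftrightarrow> parent_edge n Q j k"
  unfolding parent_edge_def using assms by auto

lemma prec_nth: "distinct xs \<Longrightarrow> i < length xs \<Longrightarrow> j < length xs \<Longrightarrow>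
  prec xs (xs ! i) (xs ! j) \<longleftrightarrow> i < j"
  unfolding prec_def by (metis nth_eq_iff_index_eq order.strict_trans)


locale rooted_tree =
  fixes V :: "'a set" and E :: "'a \<Rightarrow> 'a \<Rightarrow> bool" and v0 :: 'a
  assumes tree: "tree V E" and root: "v0 \<in> V"
begin

abbreviation level :: "'a \<Rightarrow> nat" where "level x \<equiv> dist E v0 x"

lemma finite: "finite V" and sym: "E u v \<Longrightarrow> E v u" and irrefl: "\<not> E v v"
  and edge_in: "E u v \<Longrightarrow> u \<in> V" "E u v \<Longrightarrow> v \<in> V"
  using tree unfolding tree_def graph_def by auto

lemma acyclic: "\<not> has_cycle V E" using tree unfolding tree_def by auto

lemma reach: "x \<in> V \<Longrightarrow> (E ^^ level x) v0 x"
proof -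
  assume "x \<in> V"
  then have "E\<^sup>*\<^sup>* v0 x" using tree root unfolding tree_def connected_graph_def by auto
  then obtain n where "(E ^^ n) v0 x" using rtranclp_imp_relpowp by metis
  then show ?thesis by (rule dist_attain)
qed

lemma level_zero_iff: "x \<in> V \<Longrightarrow> level x = 0 \<longleftrightarrow> x = v0"
proof
  assume "x \<in> V" "level x = 0"
  then show "x = v0" using reach[of x] by simp
next
  assume "x = v0"
  then show "level x = 0" using dist_le[of 0 E v0 v0] by simp
qed

lemma level_root: "level v0 = 0" using level_zero_iff[OF root] by simp

lemma level_edge: "E w x \<Longrightarrow> level x \<le> level w + 1"
proof -
  assume e: "E w x"
  then have "(E ^^ Suc (level w)) v0 x" using reach[of w] edge_in e by (auto intro: relpowp_Suc_I)
  then show ?thesis using dist_le by fastforce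
qed

definition parent :: "'a \<Rightarrow> 'a" where
  "parent x = (SOME w. E w x \<and> level w + 1 = level x)"

lemma parent_exists:
  assumes "x \<in> V" "x \<noteq> v0" shows "\<exists>w. E w x \<and> level w + 1 = level x"
proof -
  obtain m where m: "level x = Suc m"
    using level_zero_iff[OF assms(1)] assms(2) by (cases "level x") auto
  have "(E ^^ Suc m) v0 x" using reach[OF assms(1)] m by simp
  then obtain w where w: "(E ^^ m) v0 w" "E w x" by (auto elim: relpowp_Suc_E)
  have "level w \<le> m" using dist_le[OF w(1)] .
  moreover have "level x \<le> level w + 1" using level_edge[OF w(2)] .
  ultimately show ?thesis using w m by (intro exI[of _ w]) auto
qed

lemma parent:
  assumes "x \<in> V" "x \<noteq> v0"
  shows "E (parent x) x" "level (parent x) + 1 = level x" "parent x \<in> V"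
proof -
  have "E (parent x) x \<and> level (parent x) + 1 = level x"
    unfolding parent_def using someI_ex[OF parent_exists[OF assms]] .
  then show "E (parent x) x" "level (parent x) + 1 = level x" "parent x \<in> V"
    using edge_in by auto
qed

text \<open>Two distinct vertices on a common level are joined by a path of length at least two
  that stays at or above that level (climb to the common ancestor and back down).  Closing
  it with one more edge yields the cycles used to contradict acyclicity below.\<close>
lemma same_level_path:
  "x \<in> V \<Longrightarrow> y \<in> V \<Longrightarrow> x \<noteq> y \<Longrightarrow> level x = k \<Longrightarrow> level y = k \<Longrightarrow>
   \<exists>vs. successively E vs \<and> distinct vs \<and> hd vs = x \<and> last vs = y \<and> 3 \<le> length vs
     \<and> set vs \<subseteq> V \<and> (\<forall>z\<in>set vs. level z \<le> k)"
proof (induction k arbitrary: x y)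
  case 0
  then show ?case using level_zero_iff[of x] level_zero_iff[of y] by simp
next
  case (Suc k)
  have "x \<noteq> v0" "y \<noteq> v0" using Suc.prems(4,5) level_root by auto
  note px = parent[OF Suc.prems(1) \<open>x \<noteq> v0\<close>] and py = parent[OF Suc.prems(2) \<open>y \<noteq> v0\<close>]
  show ?case
  proof (cases "parent x = parent y")
    case True
    have "x \<noteq> parent x" "y \<noteq> parent y" using px(2) py(2) by auto
    then show ?thesis
      using True Suc.prems px py sym[OF px(1)]
      by (intro exI[of _ "[x, parent x, y]"]) auto
  next
    case False
    obtain Q where Q: "successively E Q" "distinct Q" "hd Q = parent x" "last Q = parent y"
      "3 \<le> length Q" "set Q \<subseteq> V" "\<forall>z\<in>set Q. level z \<le> k"
      using Suc.IH[OF px(3) py(3) False] px py Suc.prems by auto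
    have "Q \<noteq> []" using Q by auto
    have "x \<notin> set Q" "y \<notin> set Q" using Q(7) Suc.prems by fastforce+
    then show ?thesis
    proof (intro exI[of _ "[x] @ Q @ [y]"] conjI)
      show "successively E ([x] @ Q @ [y])" using Q(1,3,4) \<open>Q \<noteq> []\<close> sym[OF px(1)] py(1)
        unfolding successively_append_iff by simp
    qed (use Q Suc.prems in auto)
  qed
qed

lemma edge_levels_differ: assumes "E x y" shows "level x \<noteq> level y"
proof
  assume eq: "level x = level y"
  have "x \<noteq> y" using irrefl assms by auto
  obtain Q where Q: "successively E Q" "distinct Q" "hd Q = x" "last Q = y" "3 \<le> length Q"
      "set Q \<subseteq> V"
    using same_level_path[OF edge_in(1)[OF assms] edge_in(2)[OF assms] \<open>x \<noteq> y\<close> refl eq[symmetric]]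
    by blast
  have "has_cycle V E" by (rule has_cycle_intro[OF Q(1,2,5,6)]) (simp add: Q(3,4) sym[OF assms])
  then show False using acyclic by simp
qed

text \<open>A vertex has only one neighbour on the level above: two of them would lie on a cycle.\<close>
lemma parent_unique:
  assumes "x \<in> V" "E w x" "level w + 1 = level x" shows "w = parent x"
proof (rule ccontr)
  assume ne: "w \<noteq> parent x"
  have "x \<noteq> v0" using assms(3) level_root by auto
  note px = parent[OF assms(1) this]
  obtain Q where Q: "successively E Q" "distinct Q" "hd Q = w" "last Q = parent x"
      "3 \<le> length Q" "set Q \<subseteq> V" "\<forall>z\<in>set Q. level z \<le> level w"
    using same_level_path[of w "parent x" "level w"] edge_in assms px ne by auto
  have "Q \<noteq> []" using Q by auto
  have "x \<notin> set Q" using Q(7) assms by fastforce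
  have "has_cycle V E"
  proof (rule has_cycle_intro)
    show "successively E (Q @ [x])"
      using Q(1,4) \<open>Q \<noteq> []\<close> px(1) by (simp add: successively_append_iff)
    show "E (last (Q @ [x])) (hd (Q @ [x]))" using \<open>Q \<noteq> []\<close> Q(3) sym[OF assms(2)] by simp
  qed (use Q \<open>x \<notin> set Q\<close> assms(1) in auto)
  then show False using acyclic by simp
qed

lemma edge_iff_parent:
  assumes "x \<in> V" "y \<in> V"
  shows "E x y \<longleftrightarrow> (y \<noteq> v0 \<and> x = parent y) \<or> (x \<noteq> v0 \<and> y = parent x)"
proof
  assume e: "E x y"
  have "level y \<le> level x + 1" "level x \<le> level y + 1" "level x \<noteq> level y"
    using level_edge[OF e] level_edge[OF sym[OF e]] edge_levels_differ[OF e] by auto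
  then consider "level y = level x + 1" | "level x = level y + 1" by linarith
  then show "(y \<noteq> v0 \<and> x = parent y) \<or> (x \<noteq> v0 \<and> y = parent x)"
  proof cases
    case 1
    then show ?thesis using parent_unique[OF assms(2) e] level_root by auto
  next
    case 2
    then show ?thesis using parent_unique[OF assms(1) sym[OF e]] level_root by auto
  qed
next
  assume "(y \<noteq> v0 \<and> x = parent y) \<or> (x \<noteq> v0 \<and> y = parent x)"
  then show "E x y" using parent assms sym by blast
qed

definition children :: "'a \<Rightarrow> 'a set" where
  "children x = {y \<in> V. y \<noteq> v0 \<and> parent y = x}"

lemma deg_children:
  assumes "x \<in> V"
  shows "deg V E x = card (children x) + (if x = v0 then 0 else 1)"
proof -
  have nbrs: "{u \<in> V. E x u} = children x \<union> (if x = v0 then {} else {parent x})"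
    using edge_iff_parent[OF assms] parent assms unfolding children_def by auto
  have "finite (children x)" using finite unfolding children_def by auto
  moreover have "parent x \<notin> children x" if "x \<noteq> v0"
  proof
    assume "parent x \<in> children x"
    then have "parent (parent x) = x" "parent x \<noteq> v0" "parent x \<in> V" unfolding children_def by auto
    then have "level x + 1 = level (parent x)" using parent(2)[of "parent x"] by simp
    then show False using parent(2)[OF assms that] by simp
  qed
  ultimately show ?thesis unfolding deg_def nbrs by auto
qed

text \<open>Handshake lemma for trees: every non-root vertex is the child of exactly one vertex.\<close>
lemma sum_deg: "(\<Sum>x\<in>V. deg V E x) = 2 * (card V - 1)"
proof -
  have "(\<Sum>x\<in>V. deg V E x)
      = (\<Sum>x\<in>V. card (children x)) + (\<Sum>x\<in>V. (if x = v0 then 0 else 1))"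
    using deg_children by (simp add: sum.distrib)
  also have "(\<Sum>x\<in>V. card (children x)) = card (\<Union>x\<in>V. children x)"
    by (rule card_UN_disjoint[symmetric]) (use finite in \<open>auto simp: children_def\<close>)
  also have "(\<Union>x\<in>V. children x) = V - {v0}"
    unfolding children_def using parent(3) by blast
  also have "(\<Sum>x\<in>V. (if x = v0 then 0 else 1::nat)) = card (V - {v0})"
    using sum.remove[OF finite root, of "\<lambda>x. if x = v0 then 0 else 1::nat"] by simp
  finally show ?thesis using card_Diff_singleton[OF root] finite by simp
qed

end


lemma tree_degree_list:
  assumes t: "tree V E" and d: "d = rev (sorted_list_of_multiset (degree_sequence V E))"
  shows "1 \<le> length d" "(\<Sum>i<length d. d ! i) = 2 * (length d - 1)"
    and "\<And>i. 1 \<le> i \<Longrightarrow> i < length d \<Longrightarrow> 1 \<le> d ! i" and "sorted (rev d)"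
proof -
  have fin: "finite V" and ne: "V \<noteq> {}" using t unfolding tree_def graph_def by auto
  then obtain v0 where v0: "v0 \<in> V" by blast
  interpret rooted_tree V E v0 using t v0 by unfold_locales
  have md: "mset d = degree_sequence V E" using d by simp
  have len: "length d = card V" using md by (metis size_mset size_image_mset
      degree_sequence_def size_mset_set)
  show "1 \<le> length d" using len fin ne by (simp add: Suc_le_eq card_gt_0_iff)
  have "(\<Sum>i<length d. d ! i) = sum_list d" by (simp add: sum_list_sum_nth atLeast0LessThan)
  also have "\<dots> = sum_mset (degree_sequence V E)" using md sum_mset_sum_list by metis
  also have "\<dots> = 2 * (card V - 1)"
    unfolding degree_sequence_def using sum_deg sum_unfold_sum_mset by metis
  finally show "(\<Sum>i<length d. d ! i) = 2 * (length d - 1)" using len by simp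
  show "sorted (rev d)" using d by simp
  fix i assume i: "1 \<le> i" "i < length d"
  have "d ! i \<in># degree_sequence V E" using i md by (metis nth_mem set_mset_mset)
  then obtain x where x: "x \<in> V" "d ! i = deg V E x" using fin unfolding degree_sequence_def by auto
  have "card (V - {x}) \<ge> 1" using i len x fin by (simp add: card_Diff_singleton)
  then have "V - {x} \<noteq> {}" by (metis card.empty not_one_le_zero)
  then obtain w where w: "w \<in> V" "w \<noteq> x" by blast
  interpret W: rooted_tree V E w using t w by unfold_locales
  show "1 \<le> d ! i" using W.deg_children[OF x(1)] x w(2) by simp
qed


lemma card_le_sum_fibres:
  "finite S \<Longrightarrow> card {j\<in>S. P j \<le> (a::nat)} = (\<Sum>i\<le>a. card {j\<in>S. P j = i})"
proof (induction a)
  case 0 then show ?case by simp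
next
  case (Suc a)
  have "{j\<in>S. P j \<le> Suc a} = {j\<in>S. P j \<le> a} \<union> {j\<in>S. P j = Suc a}" by auto
  moreover have "card ({j\<in>S. P j \<le> a} \<union> {j\<in>S. P j = Suc a}) =
     card {j\<in>S. P j \<le> a} + card {j\<in>S. P j = Suc a}"
    using Suc.prems by (intro card_Un_disjoint) auto
  ultimately show ?case using Suc by simp
qed

text \<open>Inductive step of the uniqueness of monotone maps with given fibres: if \<open>P\<close> and a
  monotone \<open>Q\<close> have equal fibre sizes and agree below \<open>j\<close>, then \<open>P j < Q j\<close> is impossible,
  since then \<open>P\<close> would put strictly more points than \<open>Q\<close> at or below the value \<open>P j\<close>.\<close>
lemma agree_below_not_less:
  fixes P Q :: "nat \<Rightarrow> nat"
  assumes monoQ: "\<And>j j'. 1 \<le> j \<Longrightarrow> j \<le> j' \<Longrightarrow> j' < n \<Longrightarrow> Q j \<le> Q j'"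
    and fibres: "\<And>i. card {j \<in> {1..<n}. P j = i} = card {j \<in> {1..<n}. Q j = i}"
    and below: "\<And>j'. 1 \<le> j' \<Longrightarrow> j' < j \<Longrightarrow> P j' = Q j'"
    and j: "1 \<le> j" "j < n"
  shows "\<not> P j < Q j"
proof
  assume lt: "P j < Q j"
  define a where "a = P j"
  define AP where "AP = {j'\<in>{1..<n}. P j' \<le> a}"
  define AQ where "AQ = {j'\<in>{1..<n}. Q j' \<le> a}"
  define B where "B = {j'\<in>{1..<n}. j' < j \<and> P j' \<le> a}"
  have "card AP = card AQ" unfolding AP_def AQ_def
    using card_le_sum_fibres[of "{1..<n}" P a] card_le_sum_fibres[of "{1..<n}" Q a] fibres by simp
  moreover have "AQ \<subseteq> B"
  proof
    fix j' assume "j' \<in> AQ"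
    then have j': "1 \<le> j'" "j' < n" "Q j' \<le> a" unfolding AQ_def by auto
    have "j' < j"
    proof (rule ccontr)
      assume "\<not> j' < j"
      then have "Q j \<le> Q j'" using monoQ[OF j(1) _ j'(2)] by simp
      then show False using j' lt a_def by simp
    qed
    then show "j' \<in> B" unfolding B_def using below[OF j'(1)] j' by auto
  qed
  moreover have "B \<subset> AP" unfolding AP_def B_def a_def using j by auto
  moreover have "finite AP" unfolding AP_def by simp
  ultimately have "card AQ < card AP"
    using card_mono[of B AQ] psubset_card_mono[of AP B] finite_subset[of B AP] by force
  then show False using \<open>card AP = card AQ\<close> by simp
qed

lemma monotone_maps_eq_by_fibres:
  fixes P Q :: "nat \<Rightarrow> nat"
  assumes monoP: "\<And>j j'. 1 \<le> j \<Longrightarrow> j \<le> j' \<Longrightarrow> j' < n \<Longrightarrow> P j \<le> P j'"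
    and monoQ: "\<And>j j'. 1 \<le> j \<Longrightarrow> j \<le> j' \<Longrightarrow> j' < n \<Longrightarrow> Q j \<le> Q j'"
    and fibres: "\<And>i. card {j \<in> {1..<n}. P j = i} = card {j \<in> {1..<n}. Q j = i}"
  shows "1 \<le> j \<Longrightarrow> j < n \<Longrightarrow> P j = Q j"
proof (induction j rule: less_induct)
  case (less j)
  have below: "\<And>j'. 1 \<le> j' \<Longrightarrow> j' < j \<Longrightarrow> P j' = Q j'" using less by auto
  have "\<not> P j < Q j" using agree_below_not_less[OF monoQ fibres below less.prems] .
  moreover have "\<not> Q j < P j"
    using agree_below_not_less[of n P Q j, OF monoP fibres[symmetric]] below less.prems by metis
  ultimately show ?case by simp
qed


text \<open>The canonical tree of a non-increasing degree list \<open>d\<close> on the vertices \<open>0, ..., N-1\<close>: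
  the root 0 receives \<open>d ! 0\<close> children and every other vertex \<open>i\<close> receives \<open>d ! i - 1\<close>
  (its child budget); the vertices \<open>1, 2, ...\<close> are handed out in order, vertex \<open>j\<close> going
  to the first vertex whose cumulative budget reaches \<open>j\<close>.\<close>
locale degree_list =
  fixes d :: "nat list"
  assumes nonempty: "1 \<le> length d"
    and sum_degrees: "(\<Sum>i<length d. d ! i) = 2 * (length d - 1)"
    and positive: "\<And>i. 1 \<le> i \<Longrightarrow> i < length d \<Longrightarrow> 1 \<le> d ! i"
    and non_increasing: "sorted (rev d)"
begin

abbreviation "N \<equiv> length d"

lemma degree_antimono: "i \<le> j \<Longrightarrow> j < N \<Longrightarrow> d ! j \<le> d ! i"
  using sorted_rev_nth_mono[OF non_increasing] .

definition budget :: "nat \<Rightarrow> nat" where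
  "budget i = (if i = 0 then d ! 0 else d ! i - 1)"

definition budget_sum :: "nat \<Rightarrow> nat" where
  "budget_sum m = (\<Sum>i<m. budget i)"

definition degree_sum :: "nat \<Rightarrow> nat" where
  "degree_sum m = (\<Sum>i<m. d ! i)"

definition cparent :: "nat \<Rightarrow> nat" where
  "cparent j = (LEAST i. j \<le> budget_sum (Suc i))"

lemma budget_sum_mono: "a \<le> b \<Longrightarrow> budget_sum a \<le> budget_sum b"
  unfolding budget_sum_def by (rule sum_mono2) auto

lemma budget_sum_Suc: "budget_sum (Suc i) = budget_sum i + budget i"
  unfolding budget_sum_def by simp

text \<open>Each non-root vertex among the first \<open>j\<close> spends one degree on its parent.\<close>
lemma budget_sum_degree_sum: "1 \<le> j \<Longrightarrow> j \<le> N \<Longrightarrow> budget_sum j + j = degree_sum j + 1"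
proof (induction j)
  case 0 then show ?case by simp
next
  case (Suc j)
  show ?case
  proof (cases "j = 0")
    case True then show ?thesis unfolding budget_sum_def degree_sum_def budget_def by simp
  next
    case False
    then have "1 \<le> d ! j" using positive Suc.prems by simp
    moreover have "budget_sum j + j = degree_sum j + 1" using Suc False by simp
    ultimately show ?thesis unfolding budget_sum_Suc using False
      by (simp add: budget_def degree_sum_def)
  qed
qed

lemma budget_sum_total: "budget_sum N = N - 1"
  using budget_sum_degree_sum[OF nonempty order.refl] sum_degrees nonempty
  unfolding degree_sum_def by simp

text \<open>The first \<open>j\<close> degrees of a non-increasing tree degree list sum to at least \<open>2j - 1\<close>:
  either all of them are at least 2, or all later degrees are 1 and the total is \<open>2(N-1)\<close>.\<close>
lemma degree_sum_lower:
  assumes "1 \<le> j" "j < N" shows "2 * j \<le> degree_sum j + 1"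
proof (cases "2 \<le> d ! (j - 1)")
  case True
  have "\<forall>i<j. 2 \<le> d ! i"
  proof (intro allI impI)
    fix i assume "i < j"
    then have "d ! (j - 1) \<le> d ! i" using degree_antimono[of i "j - 1"] assms by simp
    then show "2 \<le> d ! i" using True by simp
  qed
  then have "(\<Sum>i<j. 2) \<le> degree_sum j" unfolding degree_sum_def by (intro sum_mono) auto
  then show ?thesis by simp
next
  case False
  have "(\<Sum>i\<in>{j..<N}. d ! i) = (\<Sum>i\<in>{j..<N}. 1)"
  proof (rule sum.cong)
    fix i assume "i \<in> {j..<N}"
    then have "d ! i \<le> d ! (j - 1)" "1 \<le> d ! i" using degree_antimono[of "j - 1" i] positive[of i] assms
      by auto
    then show "d ! i = 1" using False by simp
  qed simp
  moreover have "(\<Sum>i<N. d ! i) = degree_sum j + (\<Sum>i\<in>{j..<N}. d ! i)"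
    unfolding degree_sum_def lessThan_atLeast0
    using sum.atLeastLessThan_concat[of 0 j N "nth d"] assms by simp
  ultimately show ?thesis using sum_degrees assms by simp
qed

text \<open>The budget of the first \<open>j\<close> vertices already covers the vertices \<open>1, ..., j\<close>, so the
  parent of a vertex always precedes it.\<close>
lemma budget_covers_prefix: "1 \<le> j \<Longrightarrow> j < N \<Longrightarrow> j \<le> budget_sum j"
  using degree_sum_lower budget_sum_degree_sum[of j] by fastforce

lemma cparent_le_iff:
  assumes "1 \<le> j" "j < N" shows "cparent j \<le> i \<longleftrightarrow> j \<le> budget_sum (Suc i)"
proof
  have "Suc (N - 1) = N" using assms by simp
  then have ex: "j \<le> budget_sum (Suc (N - 1))" using budget_sum_total assms by simp
  assume "cparent j \<le> i"
  have "j \<le> budget_sum (Suc (cparent j))"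
    unfolding cparent_def by (rule LeastI[of "\<lambda>i. j \<le> budget_sum (Suc i)", OF ex])
  also have "\<dots> \<le> budget_sum (Suc i)" using budget_sum_mono \<open>cparent j \<le> i\<close> by simp
  finally show "j \<le> budget_sum (Suc i)" .
next
  assume "j \<le> budget_sum (Suc i)"
  then show "cparent j \<le> i" unfolding cparent_def by (rule Least_le)
qed

lemma cparent_less: assumes "1 \<le> j" "j < N" shows "cparent j < j"
proof -
  have "j \<le> budget_sum (Suc (j - 1))" using budget_covers_prefix[OF assms] assms by simp
  then have "cparent j \<le> j - 1" using cparent_le_iff[OF assms] by blast
  then show ?thesis using assms by simp
qed

lemma cparent_mono:
  assumes "1 \<le> j" "j \<le> j'" "j' < N" shows "cparent j \<le> cparent j'"
  using cparent_le_iff[of j' "cparent j'"] cparent_le_iff[of j "cparent j'"] assms by simp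

lemma cparent_eq_iff:
  assumes "1 \<le> j" "j < N"
  shows "cparent j = i \<longleftrightarrow> budget_sum i < j \<and> j \<le> budget_sum (Suc i)"
proof (cases i)
  case 0
  then show ?thesis using cparent_le_iff[OF assms, of 0] assms by (auto simp: budget_sum_def)
next
  case (Suc i')
  have "cparent j = i \<longleftrightarrow> cparent j \<le> i \<and> \<not> cparent j \<le> i'" using Suc by auto
  then show ?thesis using cparent_le_iff[OF assms, of i] cparent_le_iff[OF assms, of i'] Suc by auto
qed

lemma cparent_fibre: assumes "i < N" shows "card {j \<in> {1..<N}. cparent j = i} = budget i"
proof -
  have "budget_sum (Suc i) \<le> budget_sum N" using budget_sum_mono assms by simp
  then have le: "budget_sum (Suc i) < N" using budget_sum_total nonempty by simp
  have "{j \<in> {1..<N}. cparent j = i} = {budget_sum i<..budget_sum (Suc i)}"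
    using cparent_eq_iff le by fastforce
  then show ?thesis using budget_sum_Suc by simp
qed

abbreviation canon_edge :: "nat \<Rightarrow> nat \<Rightarrow> bool" where
  "canon_edge \<equiv> parent_edge N cparent"

lemma canon_edge_parent: "1 \<le> k \<Longrightarrow> k < N \<Longrightarrow> canon_edge (cparent k) k"
  unfolding parent_edge_def using cparent_less[of k] by auto

lemma canon_graph: "graph {..<N} canon_edge"
proof -
  have "\<not> canon_edge k k" for k
    unfolding parent_edge_def using cparent_less[of k] by auto
  then show ?thesis unfolding graph_def parent_edge_def by auto
qed

lemma canon_reach_root: "k < N \<Longrightarrow> canon_edge\<^sup>*\<^sup>* 0 k \<and> canon_edge\<^sup>*\<^sup>* k 0"
proof (induction k rule: less_induct)
  case (less k)
  show ?case
  proof (cases "k = 0")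
    case True then show ?thesis by simp
  next
    case False
    then have k1: "1 \<le> k" by simp
    have "canon_edge\<^sup>*\<^sup>* 0 (cparent k) \<and> canon_edge\<^sup>*\<^sup>* (cparent k) 0"
      using less cparent_less[OF k1 less.prems] by simp
    moreover have "canon_edge (cparent k) k" "canon_edge k (cparent k)"
      using canon_edge_parent[OF k1 less.prems] unfolding parent_edge_def by auto
    ultimately show ?thesis
      by (meson rtranclp.rtrancl_into_rtrancl converse_rtranclp_into_rtranclp)
  qed
qed

lemma canon_connected: "connected_graph {..<N} canon_edge"
  unfolding connected_graph_def using canon_reach_root by (meson lessThan_iff rtranclp_trans)

lemma canon_smaller_neighbour: assumes "canon_edge j m" "j < m" shows "j = cparent m"
  using assms cparent_less[of j] unfolding parent_edge_def by auto

text \<open>On a cycle, the largest vertex has two distinct smaller neighbours, both of which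
  would have to be its parent.\<close>
lemma canon_acyclic: "\<not> has_cycle {..<N} canon_edge"
proof
  assume "has_cycle {..<N} canon_edge"
  then obtain vs where L3: "3 \<le> length vs" and dv: "distinct vs"
    and cyc: "\<And>i. i < length vs \<Longrightarrow> canon_edge (vs ! i) (vs ! ((i + 1) mod length vs))"
    unfolding has_cycle_def by blast
  define L where "L = length vs"
  define m where "m = Max (set vs)"
  have "vs \<noteq> []" using L3 by auto
  then have "m \<in> set vs" unfolding m_def by simp
  then obtain p where p: "p < L" "vs ! p = m" unfolding L_def by (metis in_set_conv_nth)
  have le: "\<And>i. i < L \<Longrightarrow> vs ! i \<le> m" unfolding m_def L_def by simp
  define a where "a = (if p = 0 then L - 1 else p - 1)"
  define b where "b = (if p = L - 1 then 0 else p + 1)"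
  have hL: "Suc (L - 1) = L" using L3 unfolding L_def by simp
  have a: "a < L" "(a + 1) mod L = p" "a \<noteq> p" using p L3 hL unfolding a_def L_def by auto
  have b: "b < L" "(p + 1) mod L = b" "b \<noteq> p" using p L3 hL unfolding b_def L_def by auto
  have "a \<noteq> b" using p L3 unfolding a_def b_def L_def by auto
  have "canon_edge (vs ! a) m" using cyc[of a] a p unfolding L_def by simp
  moreover have "canon_edge (vs ! b) m"
    using cyc[of p] b p unfolding L_def parent_edge_def by auto
  moreover have "vs ! a < m" "vs ! b < m" using dv a b p le unfolding L_def
    by (metis nth_eq_iff_index_eq order_le_neq_trans)+
  ultimately have "vs ! a = vs ! b" using canon_smaller_neighbour by metis
  then show False using dv a(1) b(1) \<open>a \<noteq> b\<close> unfolding L_def by (simp add: nth_eq_iff_index_eq)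
qed

lemma canon_tree: "tree {..<N} canon_edge"
proof -
  have "0 \<in> {..<N}" using nonempty by (simp add: Suc_le_eq)
  then show ?thesis unfolding tree_def using canon_graph canon_connected canon_acyclic by blast
qed

lemma canon_deg: assumes "k < N" shows "deg {..<N} canon_edge k = d ! k"
proof -
  have nbrs: "{u \<in> {..<N}. canon_edge k u}
      = {j \<in> {1..<N}. cparent j = k} \<union> (if k = 0 then {} else {cparent k})"
    using assms cparent_less[of k] unfolding parent_edge_def by auto
  have "k \<noteq> 0 \<Longrightarrow> cparent k \<notin> {j \<in> {1..<N}. cparent j = k}"
    using cparent_less[of k] cparent_less[of "cparent k"] assms by auto
  then have "deg {..<N} canon_edge k = budget k + (if k = 0 then 0 else 1)"
    unfolding deg_def nbrs using cparent_fibre[OF assms] by auto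
  then show ?thesis unfolding budget_def using positive[of k] assms by auto
qed

lemma canon_degree_sequence: "degree_sequence {..<N} canon_edge = mset d"
proof -
  have "degree_sequence {..<N} canon_edge = mset (map (deg {..<N} canon_edge) [0..<N])"
    unfolding degree_sequence_def by (metis atLeast_upt distinct_upt mset_map mset_set_set)
  also have "map (deg {..<N} canon_edge) [0..<N] = map (nth d) [0..<N]" using canon_deg by simp
  finally show ?thesis by (simp add: map_nth)
qed

sublocale canon: rooted_tree "{..<N}" canon_edge 0
proof
  show "tree {..<N} canon_edge" by (rule canon_tree)
  show "0 \<in> {..<N}" using nonempty by (simp add: Suc_le_eq)
qed

text \<open>By induction on \<open>k\<close>: the edge between \<open>k\<close> and \<open>cparent k\<close> cannot make \<open>k\<close> the
  parent of \<open>cparent k\<close>, whose parent is \<open>cparent (cparent k) < k\<close>.\<close>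
lemma canon_parent: "1 \<le> k \<Longrightarrow> k < N \<Longrightarrow> canon.parent k = cparent k"
proof (induction k rule: less_induct)
  case (less k)
  have lt: "cparent k < k" using cparent_less[OF less.prems] .
  have "(k \<noteq> 0 \<and> cparent k = canon.parent k) \<or> (cparent k \<noteq> 0 \<and> k = canon.parent (cparent k))"
    using canon.edge_iff_parent[of "cparent k" k] canon_edge_parent[OF less.prems] lt less.prems
    by simp
  moreover have "\<not> (cparent k \<noteq> 0 \<and> k = canon.parent (cparent k))"
  proof
    assume a: "cparent k \<noteq> 0 \<and> k = canon.parent (cparent k)"
    then have "k = cparent (cparent k)" using less.IH[of "cparent k"] lt less.prems by simp
    moreover have "cparent (cparent k) < cparent k" using cparent_less[of "cparent k"] a lt less.prems
      by simp
    ultimately show False using lt by simp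
  qed
  ultimately show ?case by metis
qed

lemma canon_level_cparent: "1 \<le> k \<Longrightarrow> k < N \<Longrightarrow> canon.level k = canon.level (cparent k) + 1"
  using canon.parent(2)[of k] canon_parent[of k] by simp

text \<open>Levels are non-decreasing along \<open>0, 1, ..., N-1\<close>, since \<open>cparent\<close> is monotone.\<close>
lemma canon_level_mono: "a < b \<Longrightarrow> b < N \<Longrightarrow> canon.level a \<le> canon.level b"
proof (induction b arbitrary: a rule: less_induct)
  case (less b)
  show ?case
  proof (cases "a = 0")
    case True then show ?thesis using canon.level_root by simp
  next
    case False
    then have a1: "1 \<le> a" and b1: "1 \<le> b" using less.prems by auto
    have "cparent a \<le> cparent b" using cparent_mono[of a b] a1 less.prems by simp
    moreover have "cparent b < b" using cparent_less[OF b1 less.prems(2)] .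
    ultimately have "canon.level (cparent a) \<le> canon.level (cparent b)"
      using less.IH[of "cparent b" "cparent a"] less.prems by (cases "cparent a = cparent b") auto
    then show ?thesis using canon_level_cparent[OF a1] canon_level_cparent[OF b1 less.prems(2)]
      less.prems by simp
  qed
qed

lemma canon_child: assumes "child canon_edge 0 w v" shows "1 \<le> v" "v < N" "w = cparent v"
proof -
  have e: "canon_edge w v" and l: "canon.level v = canon.level w + 1"
    using assms unfolding child_def by auto
  have "v < N" using canon.edge_in(2)[OF e] by simp
  moreover have "v \<noteq> 0" using l canon.level_root by (metis add_eq_0_iff_both_eq_0 one_neq_zero)
  moreover have "w = canon.parent v" using canon.parent_unique[OF _ e] l \<open>v < N\<close> by simp
  ultimately show "1 \<le> v" "v < N" "w = cparent v" using canon_parent by auto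
qed

lemma prec_upt: "prec [0..<n] a b \<longleftrightarrow> a < b \<and> b < n"
  using prec_nth[of "[0..<n]" a b] unfolding prec_def by auto

text \<open>The natural order \<open>0, 1, ..., N-1\<close> is a BFD-ordering of the canonical tree: levels
  are monotone, (B1) holds because \<open>cparent\<close> is monotone, (B2) because \<open>d\<close> is
  non-increasing.\<close>
lemma canon_BFD_ordering: "BFD_ordering {..<N} canon_edge 0 [0..<N]"
  unfolding BFD_ordering_def
proof (intro conjI allI impI)
  show "0 \<in> {..<N}" "[0..<N] ! 0 = 0" using nonempty by (simp_all add: Suc_le_eq)
  fix a b assume "prec [0..<N] a b"
  then show "canon.level a \<le> canon.level b" using canon_level_mono prec_upt by simp
next
  fix w1 w2 v1 v2
  assume p: "prec [0..<N] w1 w2" and c1: "child canon_edge 0 w1 v1" and c2: "child canon_edge 0 w2 v2"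
  have "cparent v1 < cparent v2" using p canon_child[OF c1] canon_child[OF c2] prec_upt by simp
  then have "v1 < v2" using cparent_mono[of v2 v1] canon_child[OF c1] canon_child[OF c2]
    by (metis not_le)
  then show "prec [0..<N] v1 v2" using canon_child[OF c2] prec_upt by simp
next
  fix v u assume "prec [0..<N] v u"
  then show "deg {..<N} canon_edge u \<le> deg {..<N} canon_edge v"
    using canon_deg degree_antimono prec_upt by simp
qed auto

end


text \<open>We identify each vertex with its
  position in \<open>xs\<close>; \<open>pidx j\<close> is the position of the parent of the \<open>j\<close>-th vertex.\<close>
locale bfd_ordered_tree = rooted_tree +
  fixes xs :: "'a list"
  assumes bfd: "BFD_ordering V E v0 xs"
begin

lemma distinct_xs: "distinct xs" and set_xs: "set xs = V" and xs_root: "xs ! 0 = v0"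
  and level_mono: "prec xs a b \<Longrightarrow> level a \<le> level b"
  and B1: "prec xs w1 w2 \<Longrightarrow> child E v0 w1 v1 \<Longrightarrow> child E v0 w2 v2 \<Longrightarrow> prec xs v1 v2"
  and B2: "prec xs v u \<Longrightarrow> deg V E u \<le> deg V E v"
  using bfd unfolding BFD_ordering_def by auto

abbreviation "n \<equiv> length xs"

lemma nth_in: "i < n \<Longrightarrow> xs ! i \<in> V" using set_xs nth_mem by blast

lemma nth_inj: "i < n \<Longrightarrow> j < n \<Longrightarrow> xs ! i = xs ! j \<longleftrightarrow> i = j"
  using distinct_xs nth_eq_iff_index_eq by metis

lemma nth_eq_root_iff: "i < n \<Longrightarrow> xs ! i = v0 \<longleftrightarrow> i = 0"
  using nth_inj[of i 0] xs_root by fastforce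

definition idx :: "'a \<Rightarrow> nat" where "idx x = (THE i. i < n \<and> xs ! i = x)"

lemma idx: assumes "x \<in> V" shows "idx x < n" "xs ! idx x = x"
proof -
  have "\<exists>!i. i < n \<and> xs ! i = x" using distinct_Ex1[OF distinct_xs] assms set_xs by auto
  then have "idx x < n \<and> xs ! idx x = x" unfolding idx_def by (rule theI')
  then show "idx x < n" "xs ! idx x = x" by auto
qed

definition pidx :: "nat \<Rightarrow> nat" where "pidx j = idx (parent (xs ! j))"

lemma pidx_parent:
  assumes "1 \<le> j" "j < n"
  shows "pidx j < n" "xs ! pidx j = parent (xs ! j)" "xs ! j \<noteq> v0"
proof -
  show nv: "xs ! j \<noteq> v0" using nth_eq_root_iff assms by simp
  have "parent (xs ! j) \<in> V" using parent(3)[OF nth_in[OF assms(2)] nv] .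
  then show "pidx j < n" "xs ! pidx j = parent (xs ! j)" unfolding pidx_def using idx by auto
qed

lemma child_pidx: assumes "1 \<le> j" "j < n" shows "child E v0 (xs ! pidx j) (xs ! j)"
  using pidx_parent[OF assms] parent[OF nth_in[OF assms(2)]] unfolding child_def by simp

text \<open>Parents precede their children, because levels are non-decreasing along \<open>xs\<close>.\<close>
lemma pidx_less: assumes "1 \<le> j" "j < n" shows "pidx j < j"
proof (rule ccontr)
  assume "\<not> pidx j < j"
  have l: "level (xs ! pidx j) + 1 = level (xs ! j)"
    using child_pidx[OF assms] unfolding child_def by simp
  then have "j < pidx j" using \<open>\<not> pidx j < j\<close> by (cases "pidx j = j") auto
  then have "prec xs (xs ! j) (xs ! pidx j)"
    using prec_nth[OF distinct_xs assms(2) pidx_parent(1)[OF assms]] by simp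
  then show False using level_mono l by fastforce
qed

text \<open>Condition (B1) says precisely that \<open>pidx\<close> is monotone.\<close>
lemma pidx_mono: assumes "1 \<le> j" "j \<le> j'" "j' < n" shows "pidx j \<le> pidx j'"
proof (rule ccontr)
  assume "\<not> pidx j \<le> pidx j'"
  have j: "1 \<le> j" "j < n" and j': "1 \<le> j'" "j' < n" using assms by auto
  have "prec xs (xs ! pidx j') (xs ! pidx j)"
    using prec_nth[OF distinct_xs pidx_parent(1)[OF j'] pidx_parent(1)[OF j]]
      \<open>\<not> pidx j \<le> pidx j'\<close> by simp
  then have "prec xs (xs ! j') (xs ! j)" using B1 child_pidx[OF j'] child_pidx[OF j] by blast
  then show False using prec_nth[OF distinct_xs j'(2) j(2)] assms by simp
qed

lemma pidx_fibre: assumes "i < n"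
  shows "nth xs ` {j \<in> {1..<n}. pidx j = i} = children (xs ! i)"
proof
  show "nth xs ` {j \<in> {1..<n}. pidx j = i} \<subseteq> children (xs ! i)"
  proof
    fix y assume "y \<in> nth xs ` {j \<in> {1..<n}. pidx j = i}"
    then obtain j where j: "1 \<le> j" "j < n" "pidx j = i" "y = xs ! j" by auto
    show "y \<in> children (xs ! i)"
      unfolding children_def using pidx_parent[OF j(1,2)] j nth_in by auto
  qed
next
  show "children (xs ! i) \<subseteq> nth xs ` {j \<in> {1..<n}. pidx j = i}"
  proof
    fix y assume "y \<in> children (xs ! i)"
    then have y: "y \<in> V" "y \<noteq> v0" "parent y = xs ! i" unfolding children_def by auto
    have j: "idx y < n" "xs ! idx y = y" using idx[OF y(1)] by auto
    then have j1: "1 \<le> idx y" using y(2) xs_root by (cases "idx y") auto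
    have "xs ! pidx (idx y) = xs ! i" using pidx_parent(2)[OF j1 j(1)] j y(3) by simp
    then have "pidx (idx y) = i" using nth_inj[OF pidx_parent(1)[OF j1 j(1)] assms] by simp
    then show "y \<in> nth xs ` {j \<in> {1..<n}. pidx j = i}" using j j1 by force
  qed
qed

lemma deg_nth: assumes "i < n"
  shows "deg V E (xs ! i) = card {j \<in> {1..<n}. pidx j = i} + (if i = 0 then 0 else 1)"
proof -
  have "inj_on (nth xs) {j \<in> {1..<n}. pidx j = i}" using inj_on_nth[OF distinct_xs] by auto
  then have "card {j \<in> {1..<n}. pidx j = i} = card (children (xs ! i))"
    using card_image pidx_fibre[OF assms] by fastforce
  then show ?thesis using deg_children[OF nth_in[OF assms]] nth_eq_root_iff[OF assms] by simp
qed

lemma edge_nth: assumes "i < n" "j < n"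
  shows "E (xs ! i) (xs ! j) \<longleftrightarrow> parent_edge n pidx i j"
proof -
  have parent_pos: "(xs ! k \<noteq> v0 \<and> xs ! l = parent (xs ! k)) \<longleftrightarrow> (k \<noteq> 0 \<and> l = pidx k)"
    if "k < n" "l < n" for k l
  proof (cases "k = 0")
    case True then show ?thesis using xs_root by simp
  next
    case False
    then have "1 \<le> k" by simp
    then show ?thesis using pidx_parent[OF _ that(1)] nth_inj[OF that(2) pidx_parent(1)] False that
      by metis
  qed
  show ?thesis
    using edge_iff_parent[OF nth_in[OF assms(1)] nth_in[OF assms(2)]]
      parent_pos[OF assms] parent_pos[OF assms(2,1)] assms
    unfolding parent_edge_def by blast
qed

lemma degree_sequence_xs: "degree_sequence V E = mset (map (deg V E) xs)"
  unfolding degree_sequence_def using set_xs mset_set_set[OF distinct_xs] by (metis mset_map)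

lemma degrees_non_increasing: "sorted (rev (map (deg V E) xs))"
  unfolding sorted_rev_iff_nth_mono
proof (intro allI impI)
  fix i j assume "i \<le> j" "j < length (map (deg V E) xs)"
  then show "map (deg V E) xs ! j \<le> map (deg V E) xs ! i"
    using B2 prec_nth[OF distinct_xs, of i j] by (cases "i = j") auto
qed

end

lemma isomorphic_via_common_indexing:
  assumes "bij_betw h A V1" "bij_betw g A V2"
    and "\<And>i j. i \<in> A \<Longrightarrow> j \<in> A \<Longrightarrow> E1 (h i) (h j) \<longleftrightarrow> E2 (g i) (g j)"
  shows "isomorphic V1 E1 V2 E2"
  unfolding isomorphic_def
proof (intro exI conjI ballI)
  show "bij_betw (g \<circ> inv_into A h) V1 V2"
    using bij_betw_trans[OF bij_betw_inv_into[OF assms(1)] assms(2)] .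
  fix u v assume "u \<in> V1" "v \<in> V1"
  then have u: "h (inv_into A h u) = u" "inv_into A h u \<in> A"
    and v: "h (inv_into A h v) = v" "inv_into A h v \<in> A"
    using assms(1) by (auto simp: bij_betw_def f_inv_into_f inv_into_into)
  show "E1 u v \<longleftrightarrow> E2 ((g \<circ> inv_into A h) u) ((g \<circ> inv_into A h) v)"
    using assms(3)[OF u(2) v(2)] u(1) v(1) by simp
qed

lemma sorted_rev_eq:
  assumes "sorted (rev L1)" "sorted (rev L2)" "mset L1 = mset L2"
  shows "L1 = L2"
proof -
  have "sort (rev L2) = rev L1" using properties_for_sort[of "rev L1" "rev L2"] assms by simp
  moreover have "sort (rev L2) = rev L2" using sorted_sort_id[OF assms(2)] .
  ultimately show ?thesis by simp
qed

text \<open>Two BFD-orderings of trees with the same degree sequence have the same length and the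
  same parent positions: the degree lists coincide, hence so do the fibre sizes of the two
  monotone maps \<open>pidx\<close>.\<close>
lemma bfd_same_parent_positions:
  assumes A: "bfd_ordered_tree V1 E1 v1 xs1" and B: "bfd_ordered_tree V2 E2 v2 xs2"
    and ds: "degree_sequence V1 E1 = degree_sequence V2 E2"
  shows "length xs1 = length xs2"
    and "\<And>j. 1 \<le> j \<Longrightarrow> j < length xs1 \<Longrightarrow>
          bfd_ordered_tree.pidx E1 v1 xs1 j = bfd_ordered_tree.pidx E2 v2 xs2 j"
proof -
  interpret A: bfd_ordered_tree V1 E1 v1 xs1 by (rule A)
  interpret B: bfd_ordered_tree V2 E2 v2 xs2 by (rule B)
  have ms: "mset (map (deg V1 E1) xs1) = mset (map (deg V2 E2) xs2)"
    using ds A.degree_sequence_xs B.degree_sequence_xs by simp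
  show len: "length xs1 = length xs2" using arg_cong[OF ms, of size] by simp
  have degs: "map (deg V1 E1) xs1 = map (deg V2 E2) xs2"
    using sorted_rev_eq[OF A.degrees_non_increasing B.degrees_non_increasing ms] .
  have same_deg: "deg V1 E1 (xs1 ! i) = deg V2 E2 (xs2 ! i)" if "i < A.n" for i
    using arg_cong[OF degs, of "\<lambda>l. l ! i"] len that by simp
  have fibres: "card {j \<in> {1..<A.n}. A.pidx j = i} = card {j \<in> {1..<A.n}. B.pidx j = i}" for i
  proof (cases "i < A.n")
    case True
    then show ?thesis using A.deg_nth[of i] B.deg_nth[of i] same_deg[OF True] len by simp
  next
    case False
    have "{j \<in> {1..<A.n}. A.pidx j = i} = {}" using A.pidx_less False by fastforce
    moreover have "{j \<in> {1..<A.n}. B.pidx j = i} = {}" using B.pidx_less len False by fastforce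
    ultimately show ?thesis by (simp only:)
  qed
  have "1 \<le> j \<Longrightarrow> j \<le> j' \<Longrightarrow> j' < A.n \<Longrightarrow> B.pidx j \<le> B.pidx j'" for j j'
    using B.pidx_mono len by simp
  then show "\<And>j. 1 \<le> j \<Longrightarrow> j < A.n \<Longrightarrow> A.pidx j = B.pidx j"
    using monotone_maps_eq_by_fibres[OF A.pidx_mono _ fibres] by blast
qed

text \<open>Uniqueness: BFD-trees with the same degree sequence are isomorphic, both being the
  parent tree of the same map on positions.\<close>
theorem bfd_trees_isomorphic:
  assumes "tree V1 E1" "BFD_ordering V1 E1 v1 xs1" "tree V2 E2" "BFD_ordering V2 E2 v2 xs2"
    and ds: "degree_sequence V1 E1 = degree_sequence V2 E2"
  shows "isomorphic V1 E1 V2 E2"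
proof -
  have A: "bfd_ordered_tree V1 E1 v1 xs1" and B: "bfd_ordered_tree V2 E2 v2 xs2"
    using assms unfolding bfd_ordered_tree_def bfd_ordered_tree_axioms_def rooted_tree_def
      BFD_ordering_def by auto
  interpret A: bfd_ordered_tree V1 E1 v1 xs1 by (rule A)
  interpret B: bfd_ordered_tree V2 E2 v2 xs2 by (rule B)
  note same = bfd_same_parent_positions[OF A B ds]
  show ?thesis
  proof (rule isomorphic_via_common_indexing)
    show "bij_betw (nth xs1) {..<A.n} V1" using bij_betw_nth[OF A.distinct_xs] A.set_xs by simp
    show "bij_betw (nth xs2) {..<A.n} V2" using bij_betw_nth[OF B.distinct_xs] B.set_xs same(1)
      by simp
    fix i j assume "i \<in> {..<A.n}" "j \<in> {..<A.n}"
    then show "E1 (xs1 ! i) (xs1 ! j) \<longleftrightarrow> E2 (xs2 ! i) (xs2 ! j)"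
      using A.edge_nth B.edge_nth parent_edge_cong[of A.n A.pidx B.pidx] same by simp
  qed
qed

theorem lemma8:
  fixes \<pi> :: "nat multiset"
  assumes "tree_sequence \<pi>"
  shows "(\<exists>(V :: nat set) E. tree V E \<and> degree_sequence V E = \<pi> \<and> BFD_tree V E)
    \<and> (\<forall>(V1 :: 'a set) E1 (V2 :: 'b set) E2.
         tree V1 E1 \<and> degree_sequence V1 E1 = \<pi> \<and> BFD_tree V1 E1 \<and>
         tree V2 E2 \<and> degree_sequence V2 E2 = \<pi> \<and> BFD_tree V2 E2
         \<longrightarrow> isomorphic V1 E1 V2 E2)"
proof (intro conjI allI impI)
  obtain V :: "nat set" and E where t: "tree V E" and ds: "degree_sequence V E = \<pi>"
    using assms unfolding tree_sequence_def by auto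
  define d where "d = rev (sorted_list_of_multiset \<pi>)"
  interpret degree_list d
    using tree_degree_list[OF t] ds unfolding d_def by unfold_locales auto
  have "mset d = \<pi>" unfolding d_def by simp
  then show "\<exists>(V :: nat set) E. tree V E \<and> degree_sequence V E = \<pi> \<and> BFD_tree V E"
    using canon_tree canon_degree_sequence canon_BFD_ordering unfolding BFD_tree_def by metis
next
  fix V1 :: "'a set" and E1 and V2 :: "'b set" and E2
  assume "tree V1 E1 \<and> degree_sequence V1 E1 = \<pi> \<and> BFD_tree V1 E1 \<and>
    tree V2 E2 \<and> degree_sequence V2 E2 = \<pi> \<and> BFD_tree V2 E2"
  then show "isomorphic V1 E1 V2 E2" using bfd_trees_isomorphic unfolding BFD_tree_def by metis
qed

end
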